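(* Let $1<p<q\le\infty$ and define $F_{p,q}:\mathcal{S}(\mathbb{R})\setminus\{0\}\to\mathbb{R}_{>0}$ by \[F_{p,q}(f)=\frac{\|f\|_q\|\hat f\|_q}{\|f\|_p\|\hat f\|_p}.\] If there exist sequences $(f_n)_{n\ge1}$ and $(g_n)_{n\ge1}$ in $\mathcal{S}(\mathbb{R})\setminus\{0\}$ such that $\lim_{n\to\infty}F_{p,q}(f_n)=0$, $\lim_{n\to\infty}F_{p,q}(g_n)=\infty$, and $\lambda f_n+(1-\lambda)g_n\ne0$ for all $\lambda\in[0,1]$ and all $n\ge1$, then the image of $F_{p,q}$ is all of $\mathbb{R}_{>0}$.
   Context: $\mathcal{S}(\mathbb{R})$ is the space of Schwartz functions on $\mathbb{R}$; $\|\cdot\|_r$ is the $L^r(\mathbb{R})$ norm with respect to Lebesgue measure; the Fourier transform is $\hat f(\xi)=\int_{\mathbb{R}}f(x)e^{-2\pi i x\xi}\,dx$. *)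

theory Defs
  imports "HOL-Analysis.Analysis" "HOL-Probability.Essential_Supremum"
begin

fun nth_deriv :: "nat \<Rightarrow> (real \<Rightarrow> complex) \<Rightarrow> real \<Rightarrow> complex" where
  "nth_deriv 0 f = f"
| "nth_deriv (Suc k) f = (\<lambda>x. vector_derivative (nth_deriv k f) (at x))"

definition schwartz :: "(real \<Rightarrow> complex) \<Rightarrow> bool" where
  "schwartz f \<longleftrightarrow>
     (\<forall>k x. (nth_deriv k f has_vector_derivative nth_deriv (Suc k) f x) (at x)) \<and>
     (\<forall>m k. bounded (range (\<lambda>x. \<bar>x\<bar> ^ m * norm (nth_deriv k f x))))"

definition Lnorm :: "ereal \<Rightarrow> (real \<Rightarrow> complex) \<Rightarrow> real" where
  "Lnorm r f = (if r = \<infinity> then real_of_ereal (esssup lborel (\<lambda>x. ereal (norm (f x))))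
                else (integral\<^sup>L lborel (\<lambda>x. norm (f x) powr real_of_ereal r)) powr (1 / real_of_ereal r))"

definition fourier :: "(real \<Rightarrow> complex) \<Rightarrow> real \<Rightarrow> complex" where
  "fourier f \<xi> = integral\<^sup>L lborel (\<lambda>x. f x * cis (- 2 * pi * x * \<xi>))"

definition Fpq :: "real \<Rightarrow> ereal \<Rightarrow> (real \<Rightarrow> complex) \<Rightarrow> real" where
  "Fpq p q f = (Lnorm q f * Lnorm q (fourier f)) / (Lnorm (ereal p) f * Lnorm (ereal p) (fourier f))"

end

theory Submission
  imports Defs "HOL-Probability.Levy"
begin

(* Given y > 0, pick n with F(f n) < y < F(g n).  Along the segment l f_n + (1 - l) g_n,
   l in [0, 1], all functions are nonzero Schwartz functions, and F depends continuously on l,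
   so the intermediate value theorem produces a Schwartz function with F = y.

   For continuity, the segment and the segment of Fourier transforms are dominated by a single
   C / (1 + x^2): the L^r norms then depend continuously on l by dominated convergence for finite r,
   and Lipschitz continuously for r = infinity.  For the Fourier transform of a Schwartz function h
   the bound C / (1 + xi^2) comes from the second difference h x - 2 h (x + d) + h (x + 2 d) with
   d = 1 / (2 xi): its transform is 4 hat h(xi), while two applications of the mean value
   inequality bound its L^1 norm by O(d^2).

   The denominators of F never vanish because the Fourier transform is injective: if the transform
   of an integrable h vanishes, then for u = Re h and u = Im h the positive and negative parts of u,
   normalised to probability densities, have the same characteristic function, so Levy's
   uniqueness theorem identifies them. *)

section \<open>Quadratic decay and \<open>L\<^sup>r\<close> norms\<close>

definition decays_quadratically :: "(real \<Rightarrow> complex) \<Rightarrow> bool" where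
  "decays_quadratically u \<longleftrightarrow> continuous_on UNIV u \<and> (\<exists>C. \<forall>x. norm (u x) \<le> C / (1 + x\<^sup>2))"

lemma integrable_inverse_1_plus_square_cmult: "integrable lborel (\<lambda>x::real. C / (1 + x\<^sup>2))"
proof -
  have "integrable lborel (\<lambda>x::real. inverse (1 + x\<^sup>2))"
    using integrable_inverse_1_plus_square by (simp add: set_integrable_def einterval_def)
  then show ?thesis
    by (simp add: divide_inverse)
qed

lemma inverse_1_plus_square_le: "0 \<le> C \<Longrightarrow> C / (1 + x\<^sup>2) \<le> (C::real)"
  by (simp add: divide_le_eq add_pos_nonneg mult_le_cancel_left1)

lemma powr_le_inverse_1_plus_square:
  fixes t :: real
  assumes "0 \<le> t" "t \<le> D / (1 + x\<^sup>2)" "1 \<le> r"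
  shows "t powr r \<le> D powr r / (1 + x\<^sup>2)"
proof (cases "t = 0")
  case False
  have "0 < D / (1 + x\<^sup>2)"
    using assms False by linarith
  moreover have "0 < 1 + x\<^sup>2"
    by (simp add: add_pos_nonneg)
  ultimately have D: "0 < D"
    by (simp add: zero_less_divide_iff)
  have "t \<le> D"
    using assms(2) inverse_1_plus_square_le[of D x] D by linarith
  then have "t powr r = t powr (r - 1) * t"
    using False assms by (simp add: powr_diff)
  also have "\<dots> \<le> D powr (r - 1) * (D / (1 + x\<^sup>2))"
  proof (rule mult_mono)
    show "t powr (r - 1) \<le> D powr (r - 1)"
      using powr_mono2 assms(1,3) \<open>t \<le> D\<close> by simp
  qed (use assms in simp_all)
  also have "\<dots> = D powr r / (1 + x\<^sup>2)"
    using D by (simp add: powr_diff)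
  finally show ?thesis .
qed simp

lemma inverse_1_plus_square_le_shift:
  fixes x y :: real
  assumes "\<bar>y - x\<bar> \<le> 1" "0 \<le> C"
  shows "C / (1 + y\<^sup>2) \<le> 3 * C / (1 + x\<^sup>2)"
proof -
  have "x\<^sup>2 \<le> 2 * y\<^sup>2 + 2 * (x - y)\<^sup>2"
    using zero_le_power2[of "x - 2 * y"] by (simp add: power2_eq_square algebra_simps)
  moreover have "(x - y)\<^sup>2 \<le> 1"
    using assms(1) by (simp add: abs_square_le_1 abs_minus_commute)
  ultimately have "1 + x\<^sup>2 \<le> 3 * (1 + y\<^sup>2)"
    using zero_le_power2[of y] by argo
  then have "C * (1 + x\<^sup>2) \<le> C * (3 * (1 + y\<^sup>2))"
    using assms(2) by (rule mult_left_mono)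
  then show ?thesis
    by (simp add: divide_simps add_pos_nonneg) (simp add: algebra_simps)
qed

lemma decays_quadratically_bound:
  assumes "decays_quadratically u"
  obtains C where "0 \<le> C" "\<And>x. norm (u x) \<le> C / (1 + x\<^sup>2)"
proof -
  obtain C where C: "\<And>x. norm (u x) \<le> C / (1 + x\<^sup>2)"
    using assms unfolding decays_quadratically_def by auto
  have "norm (u 0) \<le> C"
    using C[of 0] by simp
  then have "0 \<le> C"
    using norm_ge_zero order_trans by blast
  then show thesis
    using C by (rule that)
qed

lemma decays_quadratically_bounded:
  assumes "decays_quadratically u"
  obtains C where "\<And>x. norm (u x) \<le> C"
  using decays_quadratically_bound[OF assms] inverse_1_plus_square_le order_trans by metis

lemma decays_quadratically_measurable:
  "decays_quadratically u \<Longrightarrow> u \<in> borel_measurable lborel"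
  unfolding decays_quadratically_def by (auto intro: borel_measurable_continuous_onI)

lemma decays_quadratically_integrable_powr:
  assumes "decays_quadratically u" "1 \<le> r"
  shows "integrable lborel (\<lambda>x. norm (u x) powr r)"
proof -
  obtain C where "0 \<le> C" "\<And>x. norm (u x) \<le> C / (1 + x\<^sup>2)"
    using decays_quadratically_bound[OF assms(1)] by blast
  then have bound: "norm (u x) powr r \<le> C powr r / (1 + x\<^sup>2)" for x
    using powr_le_inverse_1_plus_square assms(2) by simp
  have [measurable]: "u \<in> borel_measurable lborel"
    using assms(1) by (rule decays_quadratically_measurable)
  show ?thesis
  proof (rule Bochner_Integration.integrable_bound[OF integrable_inverse_1_plus_square_cmult])
    show "AE x in lborel. norm (norm (u x) powr r) \<le> norm (C powr r / (1 + x\<^sup>2))"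
      using bound by (intro AE_I2) simp
  qed measurable
qed

lemma decays_quadratically_integrable:
  "decays_quadratically u \<Longrightarrow> integrable lborel u"
  using decays_quadratically_integrable_powr[of u 1] decays_quadratically_measurable[of u]
  by (simp add: integrable_norm_iff)

lemma continuous_AE_lborel_eq_zero:
  fixes u :: "'a::euclidean_space \<Rightarrow> 'b::real_normed_vector"
  assumes "continuous_on UNIV u" "AE x in lborel. u x = 0"
  shows "u x = 0"
proof -
  have "closed (u -` {0})"
    using assms(1) by (simp add: closed_vimage)
  moreover have "AE x in lebesgue. x \<in> u -` {0}"
    using AE_completion[OF assms(2)] by simp
  ultimately show ?thesis
    using mem_closed_if_AE_lebesgue by blast
qed

lemma decays_quadratically_integral_powr_pos:
  assumes "decays_quadratically u" "1 \<le> r" "u x0 \<noteq> 0"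
  shows "0 < (\<integral>x. norm (u x) powr r \<partial>lborel)"
proof -
  have "(\<integral>x. norm (u x) powr r \<partial>lborel) \<noteq> 0"
  proof
    assume "(\<integral>x. norm (u x) powr r \<partial>lborel) = 0"
    then have "AE x in lborel. u x = 0"
      using integral_nonneg_eq_0_iff_AE[OF decays_quadratically_integrable_powr[OF assms(1,2)]]
      by auto
    then show False
      using continuous_AE_lborel_eq_zero assms(1,3) unfolding decays_quadratically_def by blast
  qed
  moreover have "0 \<le> (\<integral>x. norm (u x) powr r \<partial>lborel)"
    by (intro integral_nonneg_AE) auto
  ultimately show ?thesis
    by linarith
qed

lemma Lnorm_ereal: "Lnorm (ereal r) u = (\<integral>x. norm (u x) powr r \<partial>lborel) powr (1 / r)"
  by (simp add: Lnorm_def)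

lemma Lnorm_infinity: "Lnorm \<infinity> u = real_of_ereal (esssup lborel (\<lambda>x. ereal (norm (u x))))"
  by (simp add: Lnorm_def)

lemma esssup_norm_nonneg:
  fixes u :: "'a \<Rightarrow> 'b::real_normed_vector"
  assumes "emeasure M (space M) \<noteq> 0"
  shows "0 \<le> esssup M (\<lambda>x. ereal (norm (u x)))"
proof -
  have "0 = esssup M (\<lambda>x. 0::ereal)"
    using esssup_const[OF assms] by simp
  also have "\<dots> \<le> esssup M (\<lambda>x. ereal (norm (u x)))"
    by (rule esssup_mono) auto
  finally show ?thesis .
qed

lemma Lnorm_infinity_le:
  assumes [measurable]: "u \<in> borel_measurable lborel"
    and "AE x in lborel. norm (u x) \<le> B"
  shows "Lnorm \<infinity> u \<le> B"
proof -
  let ?E = "esssup lborel (\<lambda>x. ereal (norm (u x)))"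
  have "?E \<le> ereal B"
    using assms(2) by (intro esssup_I) auto
  moreover have "0 \<le> ?E"
    by (rule esssup_norm_nonneg) simp
  ultimately show ?thesis
    by (cases ?E) (auto simp: Lnorm_infinity)
qed

(* Measurability is essential: the essential supremum of a non-measurable function is \<infinity>,
   and then Lnorm \<infinity> u = 0. *)
lemma AE_norm_le_Lnorm_infinity:
  assumes [measurable]: "u \<in> borel_measurable lborel"
    and "\<And>x. norm (u x) \<le> B"
  shows "AE x in lborel. norm (u x) \<le> Lnorm \<infinity> u"
proof -
  let ?E = "esssup lborel (\<lambda>x. ereal (norm (u x)))"
  have "?E \<le> ereal B"
    using assms(2) by (intro esssup_I) auto
  moreover have "0 \<le> ?E"
    by (rule esssup_norm_nonneg) simp
  ultimately have "?E = ereal (Lnorm \<infinity> u)"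
    by (cases ?E) (auto simp: Lnorm_infinity)
  then show ?thesis
    using esssup_AE[of "\<lambda>x. ereal (norm (u x))" lborel] by simp
qed

lemma Lnorm_infinity_le_add:
  assumes [measurable]: "u \<in> borel_measurable lborel" "v \<in> borel_measurable lborel"
    and "\<And>x. norm (u x) \<le> B" "\<And>x. norm (v x - u x) \<le> K"
  shows "Lnorm \<infinity> v \<le> Lnorm \<infinity> u + K"
proof (rule Lnorm_infinity_le)
  show "AE x in lborel. norm (v x) \<le> Lnorm \<infinity> u + K"
    using AE_norm_le_Lnorm_infinity[OF assms(1,3)]
  proof eventually_elim
    case (elim x)
    then show ?case
      using norm_triangle_sub[of "v x" "u x"] assms(4)[of x] by linarith
  qed
qed measurable

lemma Lnorm_pos:
  assumes "decays_quadratically u" "u x0 \<noteq> 0" "1 \<le> q"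
  shows "0 < Lnorm q u"
proof (cases q)
  case (real r)
  then have "0 < (\<integral>x. norm (u x) powr r \<partial>lborel)"
    using decays_quadratically_integral_powr_pos[OF assms(1) _ assms(2)] assms(3) by simp
  then show ?thesis
    using real by (simp add: Lnorm_ereal)
next
  case PInf
  have "\<not> Lnorm \<infinity> u \<le> 0"
  proof
    assume "Lnorm \<infinity> u \<le> 0"
    obtain B where "\<And>x. norm (u x) \<le> B"
      using decays_quadratically_bounded[OF assms(1)] by blast
    then have "AE x in lborel. norm (u x) \<le> Lnorm \<infinity> u"
      using AE_norm_le_Lnorm_infinity decays_quadratically_measurable[OF assms(1)] by blast
    moreover have "u x = 0" if "norm (u x) \<le> Lnorm \<infinity> u" for x
      using that \<open>Lnorm \<infinity> u \<le> 0\<close> by (meson norm_le_zero_iff order_trans)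
    ultimately have "AE x in lborel. u x = 0"
      by (rule eventually_mono)
    then show False
      using continuous_AE_lborel_eq_zero assms(1,2) unfolding decays_quadratically_def by blast
  qed
  then show ?thesis
    using PInf by simp
qed (use assms(3) in simp)

definition convex_comb :: "real \<Rightarrow> (real \<Rightarrow> complex) \<Rightarrow> (real \<Rightarrow> complex) \<Rightarrow> real \<Rightarrow> complex" where
  "convex_comb l a b = (\<lambda>x. complex_of_real l * a x + complex_of_real (1 - l) * b x)"

lemma norm_convex_comb_le:
  "norm (convex_comb l a b x) \<le> \<bar>l\<bar> * norm (a x) + \<bar>1 - l\<bar> * norm (b x)"
proof -
  have "norm (convex_comb l a b x) \<le> norm (complex_of_real l * a x) + norm (complex_of_real (1 - l) * b x)"
    unfolding convex_comb_def by (rule norm_triangle_ineq)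
  then show ?thesis
    by (simp only: norm_mult norm_of_real)
qed

lemma norm_convex_comb_le_add:
  assumes "l \<in> {0..1}"
  shows "norm (convex_comb l a b x) \<le> norm (a x) + norm (b x)"
proof -
  have "\<bar>l\<bar> * norm (a x) \<le> norm (a x)" "\<bar>1 - l\<bar> * norm (b x) \<le> norm (b x)"
    using assms by (auto intro!: mult_left_le_one_le)
  then show ?thesis
    using norm_convex_comb_le[of l a b x] by linarith
qed

lemma convex_comb_diff:
  "convex_comb l a b x - convex_comb m a b x = complex_of_real (l - m) * (a x - b x)"
  unfolding convex_comb_def by (simp add: algebra_simps)

lemma decays_quadratically_convex_comb:
  assumes "decays_quadratically a" "decays_quadratically b"
  shows "decays_quadratically (convex_comb l a b)"
proof -
  obtain Ca Cb where "\<And>x. norm (a x) \<le> Ca / (1 + x\<^sup>2)" "\<And>x. norm (b x) \<le> Cb / (1 + x\<^sup>2)"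
    using assms decays_quadratically_bound by metis
  then have "norm (convex_comb l a b x) \<le> \<bar>l\<bar> * (Ca / (1 + x\<^sup>2)) + \<bar>1 - l\<bar> * (Cb / (1 + x\<^sup>2))" for x
    using norm_convex_comb_le[of l a b x] by (smt (verit) abs_ge_zero mult_left_mono)
  then have "norm (convex_comb l a b x) \<le> (\<bar>l\<bar> * Ca + \<bar>1 - l\<bar> * Cb) / (1 + x\<^sup>2)" for x
    by (simp add: add_divide_distrib)
  moreover have "continuous_on UNIV (convex_comb l a b)"
    using assms unfolding convex_comb_def decays_quadratically_def by (intro continuous_intros) auto
  ultimately show ?thesis
    unfolding decays_quadratically_def by blast
qed

lemma norm_convex_comb_le_inverse_1_plus_square:
  assumes "\<And>x. norm (a x) \<le> Ca / (1 + x\<^sup>2)" "\<And>x. norm (b x) \<le> Cb / (1 + x\<^sup>2)" "l \<in> {0..1}"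
  shows "norm (convex_comb l a b x) \<le> (Ca + Cb) / (1 + x\<^sup>2)"
  using norm_convex_comb_le_add[OF assms(3), of a b x] assms(1,2)[of x] by (simp add: add_divide_distrib)

lemma continuous_on_integral_powr_convex_comb:
  assumes "decays_quadratically a" "decays_quadratically b" "1 \<le> r"
  shows "continuous_on {0..1} (\<lambda>l. \<integral>x. norm (convex_comb l a b x) powr r \<partial>lborel)"
proof (rule continuous_on_sequentiallyI)
  obtain Ca Cb where "0 \<le> Ca" "0 \<le> Cb"
    and Ca: "\<And>x. norm (a x) \<le> Ca / (1 + x\<^sup>2)" and Cb: "\<And>x. norm (b x) \<le> Cb / (1 + x\<^sup>2)"
    using assms(1,2) decays_quadratically_bound by metis
  have [measurable]: "convex_comb m a b \<in> borel_measurable lborel" for m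
    using assms(1,2) by (intro decays_quadratically_measurable decays_quadratically_convex_comb)
  fix s :: "nat \<Rightarrow> real" and l
  assume s: "\<forall>n. s n \<in> {0..1}" and "s \<longlonglongrightarrow> l"
  show "(\<lambda>n. \<integral>x. norm (convex_comb (s n) a b x) powr r \<partial>lborel)
      \<longlonglongrightarrow> (\<integral>x. norm (convex_comb l a b x) powr r \<partial>lborel)"
  proof (rule integral_dominated_convergence)
    show "integrable lborel (\<lambda>x. (Ca + Cb) powr r / (1 + x\<^sup>2))"
      by (rule integrable_inverse_1_plus_square_cmult)
    show "AE x in lborel. (\<lambda>n. norm (convex_comb (s n) a b x) powr r)
        \<longlonglongrightarrow> norm (convex_comb l a b x) powr r"
      unfolding convex_comb_def using \<open>s \<longlonglongrightarrow> l\<close> assms(3) by (intro AE_I2 tendsto_intros) auto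
    fix n
    have "norm (convex_comb (s n) a b x) powr r \<le> (Ca + Cb) powr r / (1 + x\<^sup>2)" for x
      using powr_le_inverse_1_plus_square norm_convex_comb_le_inverse_1_plus_square[OF Ca Cb s[rule_format]]
        assms(3) by simp
    then show "AE x in lborel. norm (norm (convex_comb (s n) a b x) powr r) \<le> (Ca + Cb) powr r / (1 + x\<^sup>2)"
      by simp
  qed measurable
qed

lemma continuous_on_Lnorm_infinity_convex_comb:
  assumes "decays_quadratically a" "decays_quadratically b"
  shows "continuous_on {0..1} (\<lambda>l. Lnorm \<infinity> (convex_comb l a b))"
proof -
  obtain Ba Bb where Ba: "\<And>x. norm (a x) \<le> Ba" and Bb: "\<And>x. norm (b x) \<le> Bb"
    using assms decays_quadratically_bounded by metis
  have meas: "convex_comb m a b \<in> borel_measurable lborel" for m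
    using assms by (intro decays_quadratically_measurable decays_quadratically_convex_comb)
  have bound: "norm (convex_comb m a b x) \<le> Ba + Bb" if "m \<in> {0..1}" for m x
    using norm_convex_comb_le_add[OF that, of a b x] Ba[of x] Bb[of x] by linarith
  have diff: "norm (convex_comb l a b x - convex_comb m a b x) \<le> \<bar>l - m\<bar> * (Ba + Bb)" for l m x
  proof -
    have "norm (a x - b x) \<le> Ba + Bb"
      using norm_triangle_ineq4[of "a x" "b x"] Ba[of x] Bb[of x] by linarith
    then show ?thesis
      unfolding convex_comb_diff norm_mult norm_of_real by (intro mult_left_mono) auto
  qed
  have "(Ba + Bb)-lipschitz_on {0..1} (\<lambda>l. Lnorm \<infinity> (convex_comb l a b))"
  proof (rule lipschitz_onI)
    fix l m :: real
    assume "l \<in> {0..1}" "m \<in> {0..1}"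
    then have "Lnorm \<infinity> (convex_comb l a b) \<le> Lnorm \<infinity> (convex_comb m a b) + \<bar>l - m\<bar> * (Ba + Bb)"
      and "Lnorm \<infinity> (convex_comb m a b) \<le> Lnorm \<infinity> (convex_comb l a b) + \<bar>m - l\<bar> * (Ba + Bb)"
      using Lnorm_infinity_le_add[OF meas meas bound diff] by blast+
    then show "dist (Lnorm \<infinity> (convex_comb l a b)) (Lnorm \<infinity> (convex_comb m a b)) \<le> (Ba + Bb) * dist l m"
      by (simp add: dist_real_def abs_minus_commute mult.commute)
  next
    show "0 \<le> Ba + Bb"
      using Ba[of 0] Bb[of 0] norm_ge_zero order_trans by (meson add_nonneg_nonneg)
  qed
  then show ?thesis
    by (rule lipschitz_on_continuous_on)
qed

lemma continuous_on_Lnorm_convex_comb: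
  assumes "decays_quadratically a" "decays_quadratically b" "1 \<le> q"
  shows "continuous_on {0..1} (\<lambda>l. Lnorm q (convex_comb l a b))"
proof (cases q)
  case (real r)
  have "continuous_on {0..1} (\<lambda>l. (\<integral>x. norm (convex_comb l a b x) powr r \<partial>lborel) powr (1 / r))"
  proof (rule continuous_on_powr')
    show "continuous_on {0..1} (\<lambda>l. \<integral>x. norm (convex_comb l a b x) powr r \<partial>lborel)"
      using assms real by (intro continuous_on_integral_powr_convex_comb) auto
  qed (use assms(3) real in auto)
  then show ?thesis
    using real by (simp add: Lnorm_ereal)
next
  case PInf
  then show ?thesis
    using continuous_on_Lnorm_infinity_convex_comb[OF assms(1,2)] by simp
qed (use assms(3) in simp)

lemma schwartz_has_vector_derivative:
  "schwartz h \<Longrightarrow> (nth_deriv k h has_vector_derivative nth_deriv (Suc k) h x) (at x)"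
  unfolding schwartz_def by blast

lemma schwartz_bound:
  assumes "schwartz h"
  obtains B where "\<And>x. \<bar>x\<bar> ^ m * norm (nth_deriv k h x) \<le> B"
proof -
  have "bounded (range (\<lambda>x. \<bar>x\<bar> ^ m * norm (nth_deriv k h x)))"
    using assms unfolding schwartz_def by blast
  then obtain B where "\<forall>y\<in>range (\<lambda>x. \<bar>x\<bar> ^ m * norm (nth_deriv k h x)). norm y \<le> B"
    unfolding bounded_iff by blast
  then show thesis
    using that by force
qed

lemma schwartz_decays_quadratically:
  assumes "schwartz h"
  shows "decays_quadratically (nth_deriv k h)"
proof -
  obtain B0 where B0: "\<And>x. \<bar>x\<bar> ^ 0 * norm (nth_deriv k h x) \<le> B0"
    using schwartz_bound[OF assms] by blast
  obtain B2 where B2: "\<And>x. \<bar>x\<bar> ^ 2 * norm (nth_deriv k h x) \<le> B2"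
    using schwartz_bound[OF assms] by blast
  have "norm (nth_deriv k h x) \<le> (B0 + B2) / (1 + x\<^sup>2)" for x
  proof -
    have "(1 + x\<^sup>2) * norm (nth_deriv k h x) \<le> B0 + B2"
      using B0[of x] B2[of x] by (simp add: algebra_simps)
    then show ?thesis
      by (simp add: pos_le_divide_eq add_pos_nonneg mult.commute)
  qed
  moreover have "continuous_on UNIV (nth_deriv k h)"
    using has_vector_derivative_continuous schwartz_has_vector_derivative[OF assms]
    by (blast intro: continuous_at_imp_continuous_on)
  ultimately show ?thesis
    unfolding decays_quadratically_def by blast
qed

lemma schwartz_integrable: "schwartz h \<Longrightarrow> integrable lborel h"
  using schwartz_decays_quadratically[of h 0] decays_quadratically_integrable by simp

lemma has_vector_derivative_convex_comb:
  assumes "(a has_vector_derivative a' x) (at x)" "(b has_vector_derivative b' x) (at x)"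
  shows "(convex_comb l a b has_vector_derivative convex_comb l a' b' x) (at x)"
  unfolding convex_comb_def using assms
  by (intro has_vector_derivative_add has_vector_derivative_mult_right)

lemma nth_deriv_convex_comb:
  assumes "schwartz a" "schwartz b"
  shows "nth_deriv k (convex_comb l a b) = convex_comb l (nth_deriv k a) (nth_deriv k b)"
proof (induction k)
  case (Suc k)
  show ?case
  proof
    fix x
    have "(convex_comb l (nth_deriv k a) (nth_deriv k b) has_vector_derivative
        convex_comb l (nth_deriv (Suc k) a) (nth_deriv (Suc k) b) x) (at x)"
      using assms by (intro has_vector_derivative_convex_comb schwartz_has_vector_derivative)
    then show "nth_deriv (Suc k) (convex_comb l a b) x =
        convex_comb l (nth_deriv (Suc k) a) (nth_deriv (Suc k) b) x"
      using Suc.IH by (simp add: vector_derivative_at)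
  qed
qed simp

lemma schwartz_convex_comb:
  assumes "schwartz a" "schwartz b"
  shows "schwartz (convex_comb l a b)"
  unfolding schwartz_def nth_deriv_convex_comb[OF assms]
proof (intro conjI allI)
  fix k x
  show "(convex_comb l (nth_deriv k a) (nth_deriv k b) has_vector_derivative
      convex_comb l (nth_deriv (Suc k) a) (nth_deriv (Suc k) b) x) (at x)"
    using assms by (intro has_vector_derivative_convex_comb schwartz_has_vector_derivative)
next
  fix m k
  obtain Ba Bb where Ba: "\<And>x. \<bar>x\<bar> ^ m * norm (nth_deriv k a x) \<le> Ba"
    and Bb: "\<And>x. \<bar>x\<bar> ^ m * norm (nth_deriv k b x) \<le> Bb"
    using schwartz_bound assms by metis
  have "\<bar>x\<bar> ^ m * norm (convex_comb l (nth_deriv k a) (nth_deriv k b) x) \<le> \<bar>l\<bar> * Ba + \<bar>1 - l\<bar> * Bb"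
    for x
  proof -
    have "\<bar>x\<bar> ^ m * norm (convex_comb l (nth_deriv k a) (nth_deriv k b) x)
        \<le> \<bar>l\<bar> * (\<bar>x\<bar> ^ m * norm (nth_deriv k a x)) + \<bar>1 - l\<bar> * (\<bar>x\<bar> ^ m * norm (nth_deriv k b x))"
      using mult_left_mono[OF norm_convex_comb_le[of l "nth_deriv k a" "nth_deriv k b" x], of "\<bar>x\<bar> ^ m"]
      by (simp add: algebra_simps)
    also have "\<dots> \<le> \<bar>l\<bar> * Ba + \<bar>1 - l\<bar> * Bb"
      using Ba Bb by (intro add_mono mult_left_mono) auto
    finally show ?thesis .
  qed
  then show "bounded (range (\<lambda>x. \<bar>x\<bar> ^ m * norm (convex_comb l (nth_deriv k a) (nth_deriv k b) x)))"
    unfolding bounded_iff by auto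
qed

section \<open>The Fourier transform\<close>

lemma integrable_mult_cis:
  fixes u :: "real \<Rightarrow> complex"
  assumes "integrable lborel u" "continuous_on UNIV \<theta>"
  shows "integrable lborel (\<lambda>x. u x * cis (\<theta> x))"
proof (rule Bochner_Integration.integrable_bound)
  have [measurable]: "u \<in> borel_measurable lborel"
    using assms(1) by (rule borel_measurable_integrable)
  have [measurable]: "(\<lambda>x. cis (\<theta> x)) \<in> borel_measurable lborel"
    using borel_measurable_continuous_onI[OF continuous_on_cis[OF assms(2)]] by simp
  show "(\<lambda>x. u x * cis (\<theta> x)) \<in> borel_measurable lborel"
    by measurable
qed (use assms(1) in \<open>auto simp: norm_mult\<close>)

lemma integrable_fourier_integrand:
  "integrable lborel u \<Longrightarrow> integrable lborel (\<lambda>x. u x * cis (- 2 * pi * x * \<xi>))"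
  by (intro integrable_mult_cis continuous_intros)

lemma norm_fourier_le: "norm (fourier u \<xi>) \<le> (\<integral>x. norm (u x) \<partial>lborel)"
proof -
  have "norm (fourier u \<xi>) \<le> (\<integral>x. norm (u x * cis (- 2 * pi * x * \<xi>)) \<partial>lborel)"
    unfolding fourier_def by (rule integral_norm_bound)
  then show ?thesis
    by (simp add: norm_mult)
qed

lemma fourier_add:
  assumes "integrable lborel u" "integrable lborel v"
  shows "fourier (\<lambda>x. u x + v x) \<xi> = fourier u \<xi> + fourier v \<xi>"
  unfolding fourier_def distrib_right
  using assms by (intro Bochner_Integration.integral_add integrable_fourier_integrand)

lemma fourier_diff:
  assumes "integrable lborel u" "integrable lborel v"
  shows "fourier (\<lambda>x. u x - v x) \<xi> = fourier u \<xi> - fourier v \<xi>"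
  unfolding fourier_def left_diff_distrib
  using assms by (intro Bochner_Integration.integral_diff integrable_fourier_integrand)

lemma fourier_cmult: "fourier (\<lambda>x. c * u x) \<xi> = c * fourier u \<xi>"
  unfolding fourier_def mult.assoc by (rule integral_mult_right_zero)

lemma fourier_convex_comb:
  assumes "integrable lborel a" "integrable lborel b"
  shows "fourier (convex_comb l a b) = convex_comb l (fourier a) (fourier b)"
  using assms unfolding convex_comb_def
  by (auto simp: fourier_add fourier_cmult)

lemma integrable_shift:
  fixes h :: "real \<Rightarrow> 'a::{banach, second_countable_topology}"
  shows "integrable lborel h \<Longrightarrow> integrable lborel (\<lambda>x. h (x + c))"
  using lborel_integrable_real_affine[of h 1 c] by (simp add: add.commute)

lemma fourier_shift:
  "fourier (\<lambda>x. u (x + c)) \<xi> = cis (2 * pi * c * \<xi>) * fourier u \<xi>"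
proof -
  have "fourier u \<xi> = (\<integral>x. u (c + x) * cis (- 2 * pi * (c + x) * \<xi>) \<partial>lborel)"
    unfolding fourier_def using lborel_integral_real_affine[of 1] by simp
  also have "\<dots> = (\<integral>x. cis (- 2 * pi * c * \<xi>) * (u (x + c) * cis (- 2 * pi * x * \<xi>)) \<partial>lborel)"
  proof -
    have "cis (- 2 * pi * (c + x) * \<xi>) = cis (- 2 * pi * c * \<xi>) * cis (- 2 * pi * x * \<xi>)" for x
      by (simp add: cis_mult algebra_simps)
    then show ?thesis
      by (simp add: add.commute mult.left_commute)
  qed
  also have "\<dots> = cis (- 2 * pi * c * \<xi>) * fourier (\<lambda>x. u (x + c)) \<xi>"
    unfolding fourier_def by (rule integral_mult_right_zero)
  finally show ?thesis
    by (simp add: cis_mult)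
qed

lemma continuous_fourier:
  assumes "integrable lborel u"
  shows "continuous_on UNIV (fourier u)"
proof (rule continuous_on_sequentiallyI)
  fix s :: "nat \<Rightarrow> real" and \<xi>
  assume "s \<longlonglongrightarrow> \<xi>"
  have meas: "(\<lambda>x. u x * cis (- 2 * pi * x * t)) \<in> borel_measurable lborel" for t
    using assms by (intro borel_measurable_integrable integrable_fourier_integrand)
  show "(\<lambda>n. fourier u (s n)) \<longlonglongrightarrow> fourier u \<xi>"
    unfolding fourier_def
  proof (rule integral_dominated_convergence[OF meas meas])
    show "integrable lborel (\<lambda>x. norm (u x))"
      using assms by simp
    show "AE x in lborel. (\<lambda>n. u x * cis (- 2 * pi * x * s n)) \<longlonglongrightarrow> u x * cis (- 2 * pi * x * \<xi>)"
      using \<open>s \<longlonglongrightarrow> \<xi>\<close> by (intro AE_I2 tendsto_intros)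
  qed (auto simp: norm_mult)
qed

section \<open>Quadratic decay of the Fourier transform of a Schwartz function\<close>

lemma norm_diff_le_vector_derivative_bound:
  fixes f f' :: "real \<Rightarrow> 'a::real_normed_vector"
  assumes "\<And>y. y \<in> closed_segment a b \<Longrightarrow> (f has_vector_derivative f' y) (at y)"
    and "\<And>y. y \<in> closed_segment a b \<Longrightarrow> norm (f' y) \<le> M"
  shows "norm (f b - f a) \<le> M * \<bar>b - a\<bar>"
proof -
  have "norm (f b - f a) \<le> M * norm (b - a)"
  proof (rule differentiable_bound[of "closed_segment a b"])
    show "(f has_derivative (\<lambda>t. t *\<^sub>R f' y)) (at y within closed_segment a b)"
      if "y \<in> closed_segment a b" for y
      using assms(1)[OF that] by (simp add: has_vector_derivative_def has_derivative_at_withinI)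
    show "onorm (\<lambda>t. t *\<^sub>R f' y) \<le> M" if "y \<in> closed_segment a b" for y
      using assms(2)[OF that] by (simp add: onorm_scaleR_left onorm_id)
  qed auto
  then show ?thesis
    by simp
qed

lemma closed_segment_shift_subset:
  fixes x \<delta> :: real
  assumes "y \<in> closed_segment x (x + \<delta>)"
  shows "closed_segment y (y + \<delta>) \<subseteq> closed_segment x (x + 2 * \<delta>)"
  using assms by (cases "0 \<le> \<delta>") (auto simp: closed_segment_eq_real_ivl)

lemma norm_second_difference_le:
  fixes h h' h'' :: "real \<Rightarrow> complex"
  assumes "\<And>y. (h has_vector_derivative h' y) (at y)"
    and "\<And>y. (h' has_vector_derivative h'' y) (at y)"
    and "\<And>y. y \<in> closed_segment x (x + 2 * \<delta>) \<Longrightarrow> norm (h'' y) \<le> M"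
  shows "norm (h x - 2 * h (x + \<delta>) + h (x + 2 * \<delta>)) \<le> M * \<delta>\<^sup>2"
proof -
  define g where "g y = h (y + \<delta>) - h y" for y
  have g': "(g has_vector_derivative h' (y + \<delta>) - h' y) (at y)" for y
  proof -
    have "((\<lambda>y. y + \<delta>) has_vector_derivative 1) (at y)"
      using has_vector_derivative_add[OF has_vector_derivative_id has_vector_derivative_const] by simp
    from vector_diff_chain_at[OF this assms(1)]
    have "((h \<circ> (\<lambda>y. y + \<delta>)) has_vector_derivative h' (y + \<delta>)) (at y)"
      by simp
    then show ?thesis
      unfolding g_def o_def by (intro has_vector_derivative_diff assms(1)) simp
  qed
  have g'_bound: "norm (h' (y + \<delta>) - h' y) \<le> M * \<bar>\<delta>\<bar>" if "y \<in> closed_segment x (x + \<delta>)" for y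
  proof -
    have "norm (h' (y + \<delta>) - h' y) \<le> M * \<bar>y + \<delta> - y\<bar>"
    proof (rule norm_diff_le_vector_derivative_bound)
      show "(h' has_vector_derivative h'' z) (at z)" for z
        by (rule assms(2))
      show "norm (h'' z) \<le> M" if "z \<in> closed_segment y (y + \<delta>)" for z
        using assms(3) closed_segment_shift_subset[OF \<open>y \<in> closed_segment x (x + \<delta>)\<close>] that by blast
    qed
    then show ?thesis
      by simp
  qed
  have "norm (g (x + \<delta>) - g x) \<le> (M * \<bar>\<delta>\<bar>) * \<bar>x + \<delta> - x\<bar>"
    using norm_diff_le_vector_derivative_bound[of x "x + \<delta>" g "\<lambda>y. h' (y + \<delta>) - h' y"] g' g'_bound
    by blast
  moreover have "g (x + \<delta>) - g x = h x - 2 * h (x + \<delta>) + h (x + 2 * \<delta>)"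
    unfolding g_def by (simp add: field_simps)
  ultimately show ?thesis
    by (simp add: power2_eq_square mult.assoc)
qed

lemma norm_schwartz_second_difference_le:
  assumes "schwartz h" "\<And>y. norm (nth_deriv (Suc (Suc 0)) h y) \<le> C / (1 + y\<^sup>2)"
    and "0 \<le> C" "\<bar>2 * \<delta>\<bar> \<le> 1"
  shows "norm (h x - 2 * h (x + \<delta>) + h (x + 2 * \<delta>)) \<le> 3 * C / (1 + x\<^sup>2) * \<delta>\<^sup>2"
proof (rule norm_second_difference_le)
  show "(h has_vector_derivative nth_deriv (Suc 0) h y) (at y)" for y
    using schwartz_has_vector_derivative[OF assms(1), of 0] by simp
  show "(nth_deriv (Suc 0) h has_vector_derivative nth_deriv (Suc (Suc 0)) h y) (at y)" for y
    using schwartz_has_vector_derivative[OF assms(1)] .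
  show "norm (nth_deriv (Suc (Suc 0)) h y) \<le> 3 * C / (1 + x\<^sup>2)"
    if "y \<in> closed_segment x (x + 2 * \<delta>)" for y
  proof -
    have "\<bar>y - x\<bar> \<le> 1"
      using dist_in_closed_segment[OF that] assms(4) by (simp add: dist_real_def)
    then show ?thesis
      using assms(2)[of y] inverse_1_plus_square_le_shift[OF _ assms(3)] by (meson order_trans)
  qed
qed

lemma fourier_second_difference:
  assumes "integrable lborel h" "\<xi> \<noteq> 0"
  defines "\<delta> \<equiv> 1 / (2 * \<xi>)"
  shows "fourier (\<lambda>x. h x - 2 * h (x + \<delta>) + h (x + 2 * \<delta>)) \<xi> = 4 * fourier h \<xi>"
proof -
  note shifted = integrable_shift[OF assms(1)]
  have "integrable lborel (\<lambda>x. h x - 2 * h (x + \<delta>))"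
    using assms(1) shifted by simp
  then have "fourier (\<lambda>x. h x - 2 * h (x + \<delta>) + h (x + 2 * \<delta>)) \<xi>
      = fourier h \<xi> - 2 * fourier (\<lambda>x. h (x + \<delta>)) \<xi> + fourier (\<lambda>x. h (x + 2 * \<delta>)) \<xi>"
    using assms(1) shifted by (simp add: fourier_add fourier_diff fourier_cmult)
  moreover have "2 * pi * \<delta> * \<xi> = pi" "2 * pi * (2 * \<delta>) * \<xi> = 2 * pi"
    using assms(2) by (simp_all add: \<delta>_def field_simps)
  ultimately show ?thesis
    by (simp only: fourier_shift cis_pi cis_2pi) simp
qed

lemma schwartz_fourier_decay:
  assumes "schwartz h"
  obtains K where "\<And>\<xi>. 1 \<le> \<bar>\<xi>\<bar> \<Longrightarrow> \<xi>\<^sup>2 * norm (fourier h \<xi>) \<le> K"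
proof -
  have h: "integrable lborel h"
    using assms by (rule schwartz_integrable)
  obtain C where "0 \<le> C" and C: "\<And>y. norm (nth_deriv (Suc (Suc 0)) h y) \<le> C / (1 + y\<^sup>2)"
    using decays_quadratically_bound[OF schwartz_decays_quadratically[OF assms]] by blast
  define I where "I = (\<integral>x. 3 * C / (1 + x\<^sup>2) \<partial>lborel)"
  have "\<xi>\<^sup>2 * norm (fourier h \<xi>) \<le> I / 16" if "1 \<le> \<bar>\<xi>\<bar>" for \<xi>
  proof -
    define \<delta> where "\<delta> = 1 / (2 * \<xi>)"
    have "\<xi> \<noteq> 0" "\<bar>2 * \<delta>\<bar> \<le> 1"
      using that by (auto simp: \<delta>_def abs_mult divide_simps)
    let ?D = "\<lambda>x. h x - 2 * h (x + \<delta>) + h (x + 2 * \<delta>)"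
    have D: "norm (?D x) \<le> 3 * C / (1 + x\<^sup>2) * \<delta>\<^sup>2" for x
      using assms C \<open>0 \<le> C\<close> \<open>\<bar>2 * \<delta>\<bar> \<le> 1\<close> by (rule norm_schwartz_second_difference_le)
    have "integrable lborel ?D"
      using h integrable_shift[OF h] by simp
    have "4 * norm (fourier h \<xi>) = norm (fourier ?D \<xi>)"
      using fourier_second_difference[OF h \<open>\<xi> \<noteq> 0\<close>] by (simp add: \<delta>_def norm_mult)
    also have "\<dots> \<le> (\<integral>x. norm (?D x) \<partial>lborel)"
      by (rule norm_fourier_le)
    also have "\<dots> \<le> (\<integral>x. 3 * C / (1 + x\<^sup>2) * \<delta>\<^sup>2 \<partial>lborel)"
      using \<open>integrable lborel ?D\<close> integrable_inverse_1_plus_square_cmult D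
      by (intro integral_mono) auto
    also have "\<dots> = I * \<delta>\<^sup>2"
      unfolding I_def by (rule integral_mult_left_zero)
    finally have "\<xi>\<^sup>2 * (4 * norm (fourier h \<xi>)) \<le> \<xi>\<^sup>2 * (I * \<delta>\<^sup>2)"
      by (rule mult_left_mono) simp
    moreover have "\<xi>\<^sup>2 * (I * \<delta>\<^sup>2) = I / 4"
      using \<open>\<xi> \<noteq> 0\<close> by (simp add: \<delta>_def power2_eq_square)
    ultimately show ?thesis
      by simp
  qed
  then show thesis
    by (rule that)
qed

lemma schwartz_fourier_decays_quadratically:
  assumes "schwartz h"
  shows "decays_quadratically (fourier h)"
proof -
  define A where "A = (\<integral>x. norm (h x) \<partial>lborel)"
  have A: "norm (fourier h \<xi>) \<le> A" for \<xi>
    unfolding A_def by (rule norm_fourier_le)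
  obtain K where K: "\<And>\<xi>. 1 \<le> \<bar>\<xi>\<bar> \<Longrightarrow> \<xi>\<^sup>2 * norm (fourier h \<xi>) \<le> K"
    using schwartz_fourier_decay[OF assms] by blast
  have "norm (fourier h 1) \<le> K"
    using K[of 1] by simp
  then have "0 \<le> K"
    using norm_ge_zero order_trans by blast
  have "norm (fourier h \<xi>) \<le> (2 * A + K) / (1 + \<xi>\<^sup>2)" for \<xi>
  proof -
    have "(1 + \<xi>\<^sup>2) * norm (fourier h \<xi>) \<le> 2 * A + K"
    proof (cases "1 \<le> \<bar>\<xi>\<bar>")
      case True
      have "norm (fourier h \<xi>) + \<xi>\<^sup>2 * norm (fourier h \<xi>) \<le> 2 * A + K"
        using A[of \<xi>] K[OF True] norm_ge_zero[of "fourier h \<xi>"] by linarith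
      then show ?thesis
        by (simp add: distrib_right)
    next
      case False
      then have "\<xi>\<^sup>2 * norm (fourier h \<xi>) \<le> 1 * A"
        using A[of \<xi>] by (intro mult_mono) (auto simp: abs_square_le_1)
      then show ?thesis
        using A[of \<xi>] \<open>0 \<le> K\<close> by (simp add: distrib_right)
    qed
    then show ?thesis
      by (simp add: pos_le_divide_eq add_pos_nonneg mult.commute)
  qed
  moreover have "continuous_on UNIV (fourier h)"
    using assms by (intro continuous_fourier schwartz_integrable)
  ultimately show ?thesis
    unfolding decays_quadratically_def by blast
qed

section \<open>Injectivity of the Fourier transform\<close>

lemma real_distribution_normalized_density:
  fixes f :: "real \<Rightarrow> real"
  assumes "integrable lborel f" "\<And>x. 0 \<le> f x" "(\<integral>x. f x \<partial>lborel) = c" "0 < c"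
  shows "real_distribution (density lborel (\<lambda>x. ennreal (f x / c)))"
proof -
  have [measurable]: "f \<in> borel_measurable lborel"
    using assms(1) by (rule borel_measurable_integrable)
  have "emeasure (density lborel (\<lambda>x. ennreal (f x / c))) UNIV = (\<integral>\<^sup>+ x. ennreal (f x / c) \<partial>lborel)"
    by (simp add: emeasure_density)
  also have "\<dots> = ennreal (\<integral>x. f x / c \<partial>lborel)"
    using assms by (intro nn_integral_eq_integral) auto
  also have "\<dots> = 1"
    using assms(3,4) by simp
  finally have "prob_space (density lborel (\<lambda>x. ennreal (f x / c)))"
    by (intro prob_spaceI) simp
  then show ?thesis
    unfolding real_distribution_def real_distribution_axioms_def by simp
qed

lemma char_normalized_density:
  fixes f :: "real \<Rightarrow> real"
  assumes "integrable lborel f" "\<And>x. 0 \<le> f x" "0 < c"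
  shows "char (density lborel (\<lambda>x. ennreal (f x / c))) t
    = (\<integral>x. complex_of_real (f x) * cis (t * x) \<partial>lborel) / c"
proof -
  have [measurable]: "f \<in> borel_measurable lborel"
    using assms(1) by (rule borel_measurable_integrable)
  have "char (density lborel (\<lambda>x. ennreal (f x / c))) t = (\<integral>x. (f x / c) *\<^sub>R iexp (t * x) \<partial>lborel)"
    unfolding char_def using assms(2,3) by (intro integral_density) auto
  also have "\<dots> = (\<integral>x. complex_of_real (f x) * cis (t * x) / c \<partial>lborel)"
    by (intro Bochner_Integration.integral_cong) (auto simp: scaleR_conv_of_real cis_conv_exp mult.commute)
  finally show ?thesis
    by simp
qed

(* Divided by c, the functions f and g are probability densities whose characteristic
   functions are the given integrals divided by c. *)
lemma Levy_uniqueness_density: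
  fixes f g :: "real \<Rightarrow> real"
  assumes "integrable lborel f" "\<And>x. 0 \<le> f x" "integrable lborel g" "\<And>x. 0 \<le> g x"
    and "(\<integral>x. f x \<partial>lborel) = c" "(\<integral>x. g x \<partial>lborel) = c" "0 < c"
    and eq: "\<And>t. (\<integral>x. complex_of_real (f x) * cis (t * x) \<partial>lborel)
      = (\<integral>x. complex_of_real (g x) * cis (t * x) \<partial>lborel)"
  shows "AE x in lborel. f x = g x"
proof -
  let ?Mf = "density lborel (\<lambda>x. ennreal (f x / c))"
  let ?Mg = "density lborel (\<lambda>x. ennreal (g x / c))"
  have "char ?Mf = char ?Mg"
    using char_normalized_density[OF assms(1,2,7)] char_normalized_density[OF assms(3,4,7)] eq
    by auto
  then have "?Mf = ?Mg"
    using Levy_uniqueness real_distribution_normalized_density[OF assms(1,2,5,7)]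
      real_distribution_normalized_density[OF assms(3,4,6,7)] by blast
  moreover have [measurable]: "f \<in> borel_measurable lborel" "g \<in> borel_measurable lborel"
    using assms(1,3) by (auto intro: borel_measurable_integrable)
  ultimately have "AE x in lborel. ennreal (f x / c) = ennreal (g x / c)"
    by (subst (asm) sigma_finite_measure.density_unique_iff[OF sigma_finite_lborel]) auto
  then show ?thesis
  proof eventually_elim
    case (elim x)
    then show ?case
      using assms(2,4)[of x] assms(7) by simp
  qed
qed

lemma AE_eq_if_char_integrals_eq:
  fixes f g :: "real \<Rightarrow> real"
  assumes "integrable lborel f" "\<And>x. 0 \<le> f x" "integrable lborel g" "\<And>x. 0 \<le> g x"
    and eq: "\<And>t. (\<integral>x. complex_of_real (f x) * cis (t * x) \<partial>lborel)
      = (\<integral>x. complex_of_real (g x) * cis (t * x) \<partial>lborel)"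
  shows "AE x in lborel. f x = g x"
proof -
  define c where "c = (\<integral>x. f x \<partial>lborel)"
  have "complex_of_real c = complex_of_real (\<integral>x. g x \<partial>lborel)"
    using eq[of 0] by (simp add: c_def)
  then have c: "(\<integral>x. g x \<partial>lborel) = c"
    by simp
  have "0 \<le> c"
    unfolding c_def using assms(2) by (intro integral_nonneg_AE) auto
  then consider "c = 0" | "0 < c"
    by linarith
  then show ?thesis
  proof cases
    case 1
    then have "AE x in lborel. f x = 0" "AE x in lborel. g x = 0"
      using integral_nonneg_eq_0_iff_AE[OF assms(1)] integral_nonneg_eq_0_iff_AE[OF assms(3)]
        assms(2,4) c by (auto simp: c_def)
    then show ?thesis
      by eventually_elim simp
  next
    case 2
    show ?thesis
      using Levy_uniqueness_density[OF assms(1-4) c_def[symmetric] c 2 eq] .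
  qed
qed

lemma AE_zero_if_char_integrals_zero:
  fixes u :: "real \<Rightarrow> real"
  assumes "integrable lborel u"
    and zero: "\<And>t. (\<integral>x. complex_of_real (u x) * cis (t * x) \<partial>lborel) = 0"
  shows "AE x in lborel. u x = 0"
proof -
  define up where "up x = max (u x) 0" for x
  define um where "um x = max (- u x) 0" for x
  have u: "u x = up x - um x" for x
    by (simp add: up_def um_def max_def)
  have up: "integrable lborel up" and um: "integrable lborel um"
    unfolding up_def um_def using assms(1) by auto
  have "(\<integral>x. complex_of_real (up x) * cis (t * x) \<partial>lborel)
      = (\<integral>x. complex_of_real (um x) * cis (t * x) \<partial>lborel)" for t
  proof -
    have "integrable lborel (\<lambda>x. complex_of_real (v x) * cis (t * x))"
      if "integrable lborel v" for v :: "real \<Rightarrow> real"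
      using that by (intro integrable_mult_cis integrable_of_real continuous_intros)
    then have "0 = (\<integral>x. complex_of_real (up x) * cis (t * x) \<partial>lborel)
        - (\<integral>x. complex_of_real (um x) * cis (t * x) \<partial>lborel)"
      using zero[of t] up um by (simp add: u left_diff_distrib)
    then show ?thesis
      by simp
  qed
  moreover have "0 \<le> up x" "0 \<le> um x" for x
    by (simp_all add: up_def um_def)
  ultimately have "AE x in lborel. up x = um x"
    using AE_eq_if_char_integrals_eq[OF up _ um] by blast
  then show ?thesis
    by eventually_elim (simp add: u)
qed

lemma fourier_zero_imp_AE_Re_zero:
  assumes "integrable lborel h" "\<And>\<xi>. fourier h \<xi> = 0"
  shows "AE x in lborel. Re (h x) = 0"
proof (rule AE_zero_if_char_integrals_zero)
  show "integrable lborel (\<lambda>x. Re (h x))"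
    using assms(1) by simp
  fix t
  have h: "(\<integral>x. h x * cis (s * x) \<partial>lborel) = 0" for s
    using assms(2)[of "- s / (2 * pi)"] by (simp add: fourier_def mult.commute)
  have re: "complex_of_real (Re (h x)) * cis (t * x) = (h x * cis (t * x) + cnj (h x * cis (- t * x))) / 2"
    for x by (simp add: cis_cnj distrib_right[symmetric] complex_add_cnj)
  have int: "integrable lborel (\<lambda>x. h x * cis (s * x))" for s
    using assms(1) by (intro integrable_mult_cis continuous_intros)
  have "(\<integral>x. complex_of_real (Re (h x)) * cis (t * x) \<partial>lborel)
      = (\<integral>x. h x * cis (t * x) + cnj (h x * cis (- t * x)) \<partial>lborel) / 2"
    by (simp only: re integral_divide_zero)
  also have "\<dots> = ((\<integral>x. h x * cis (t * x) \<partial>lborel) + cnj (\<integral>x. h x * cis (- t * x) \<partial>lborel)) / 2"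
    by (simp only: Bochner_Integration.integral_add[OF int integrable_cnj[OF int]]
        Bochner_Integration.integral_cnj)
  finally show "(\<integral>x. complex_of_real (Re (h x)) * cis (t * x) \<partial>lborel) = 0"
    using h[of t] h[of "- t"] by simp
qed

lemma fourier_zero_imp_AE_zero:
  assumes "integrable lborel h" "\<And>\<xi>. fourier h \<xi> = 0"
  shows "AE x in lborel. h x = 0"
proof -
  have "fourier (\<lambda>x. - \<i> * h x) \<xi> = 0" for \<xi>
    by (simp only: fourier_cmult assms(2) mult_zero_right)
  moreover have "integrable lborel (\<lambda>x. - \<i> * h x)"
    using assms(1) by simp
  ultimately have "AE x in lborel. Re (- \<i> * h x) = 0"
    by (intro fourier_zero_imp_AE_Re_zero)
  moreover have "AE x in lborel. Re (h x) = 0"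
    using assms by (rule fourier_zero_imp_AE_Re_zero)
  ultimately show ?thesis
    by eventually_elim (simp add: complex_eq_iff)
qed

lemma schwartz_eq_zero_if_fourier_eq_zero:
  assumes "schwartz h" "\<And>\<xi>. fourier h \<xi> = 0"
  shows "h = (\<lambda>x. 0)"
proof
  fix x
  have "decays_quadratically h"
    using schwartz_decays_quadratically[OF assms(1), of 0] by simp
  then show "h x = 0"
    using continuous_AE_lborel_eq_zero fourier_zero_imp_AE_zero[OF schwartz_integrable[OF assms(1)] assms(2)]
    unfolding decays_quadratically_def by blast
qed

lemma Lnorm_schwartz_pos:
  assumes "schwartz h" "h \<noteq> (\<lambda>x. 0)" "1 \<le> q"
  shows "0 < Lnorm q h" "0 < Lnorm q (fourier h)"
proof -
  obtain x where "h x \<noteq> 0"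
    using assms(2) by auto
  then show "0 < Lnorm q h"
    using schwartz_decays_quadratically[OF assms(1), of 0] assms(3) by (intro Lnorm_pos) auto
  obtain \<xi> where "fourier h \<xi> \<noteq> 0"
    using schwartz_eq_zero_if_fourier_eq_zero assms(1,2) by blast
  then show "0 < Lnorm q (fourier h)"
    using schwartz_fourier_decays_quadratically[OF assms(1)] assms(3) by (intro Lnorm_pos)
qed

lemma Fpq_pos:
  assumes "1 \<le> p" "1 \<le> q" "schwartz h" "h \<noteq> (\<lambda>x. 0)"
  shows "0 < Fpq p q h"
  using Lnorm_schwartz_pos[OF assms(3,4)] assms(1,2) by (simp add: Fpq_def)

lemma continuous_on_Fpq_convex_comb:
  assumes "1 \<le> p" "1 \<le> q" "schwartz a" "schwartz b"
    and nonzero: "\<And>l. l \<in> {0..1} \<Longrightarrow> convex_comb l a b \<noteq> (\<lambda>x. 0)"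
  shows "continuous_on {0..1} (\<lambda>l. Fpq p q (convex_comb l a b))"
proof -
  have "fourier (convex_comb l a b) = convex_comb l (fourier a) (fourier b)" for l
    using assms(3,4) by (intro fourier_convex_comb schwartz_integrable)
  then have F: "Fpq p q (convex_comb l a b) =
      Lnorm q (convex_comb l a b) * Lnorm q (convex_comb l (fourier a) (fourier b)) /
      (Lnorm p (convex_comb l a b) * Lnorm p (convex_comb l (fourier a) (fourier b)))" for l
    by (simp add: Fpq_def)
  have "decays_quadratically a" "decays_quadratically b"
    using schwartz_decays_quadratically[of _ 0] assms(3,4) by simp_all
  moreover have "decays_quadratically (fourier a)" "decays_quadratically (fourier b)"
    using assms(3,4) by (simp_all add: schwartz_fourier_decays_quadratically)
  moreover have "Lnorm p (convex_comb l a b) * Lnorm p (convex_comb l (fourier a) (fourier b)) \<noteq> 0"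
    if "l \<in> {0..1}" for l
    using Lnorm_schwartz_pos[OF schwartz_convex_comb[OF assms(3,4)] nonzero[OF that], of p] assms(1)
      \<open>\<And>l. fourier (convex_comb l a b) = convex_comb l (fourier a) (fourier b)\<close> by simp
  ultimately show ?thesis
    unfolding F using assms(1,2)
    by (intro continuous_on_divide continuous_on_mult continuous_on_Lnorm_convex_comb) auto
qed

lemma Fpq_attains_between:
  assumes "1 \<le> p" "1 \<le> q" "schwartz a" "schwartz b"
    and nonzero: "\<And>l. l \<in> {0..1} \<Longrightarrow> convex_comb l a b \<noteq> (\<lambda>x. 0)"
    and "Fpq p q a \<le> y" "y \<le> Fpq p q b"
  shows "y \<in> Fpq p q ` {h. schwartz h \<and> h \<noteq> (\<lambda>x. 0)}"
proof -
  have "convex_comb 1 a b = a" "convex_comb 0 a b = b"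
    by (simp_all add: convex_comb_def)
  then obtain l where "0 \<le> l" "l \<le> 1" "Fpq p q (convex_comb l a b) = y"
    using IVT2'[where f = "\<lambda>l. Fpq p q (convex_comb l a b)" and a = 0 and b = 1 and y = y]
      assms(6,7) continuous_on_Fpq_convex_comb[OF assms(1-5)] by auto
  moreover have "schwartz (convex_comb l a b)" "convex_comb l a b \<noteq> (\<lambda>x. 0)"
    using schwartz_convex_comb[OF assms(3,4)] nonzero \<open>0 \<le> l\<close> \<open>l \<le> 1\<close> by auto
  ultimately show ?thesis
    by blast
qed

theorem lemma4p5:
  fixes p :: real and q :: ereal
    and f g :: "nat \<Rightarrow> real \<Rightarrow> complex"
  assumes "1 < p" and "ereal p < q"
    and "\<And>n. schwartz (f n) \<and> f n \<noteq> (\<lambda>x. 0)"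
    and "\<And>n. schwartz (g n) \<and> g n \<noteq> (\<lambda>x. 0)"
    and "(\<lambda>n. Fpq p q (f n)) \<longlonglongrightarrow> 0"
    and "filterlim (\<lambda>n. Fpq p q (g n)) at_top sequentially"
    and "\<And>n l. l \<in> {0..1::real} \<Longrightarrow>
           (\<lambda>x. complex_of_real l * f n x + complex_of_real (1 - l) * g n x) \<noteq> (\<lambda>x. 0)"
  shows "Fpq p q ` {h. schwartz h \<and> h \<noteq> (\<lambda>x. 0)} = {0<..}"
proof
  have "1 \<le> p" "1 \<le> q"
    using assms(1,2) by (auto intro: order_trans[of 1 "ereal p"])
  then show "Fpq p q ` {h. schwartz h \<and> h \<noteq> (\<lambda>x. 0)} \<subseteq> {0<..}"
    using Fpq_pos by auto
  show "{0<..} \<subseteq> Fpq p q ` {h. schwartz h \<and> h \<noteq> (\<lambda>x. 0)}"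
  proof
    fix y :: real
    assume "y \<in> {0<..}"
    then have "eventually (\<lambda>n. Fpq p q (f n) < y \<and> y < Fpq p q (g n)) sequentially"
      using order_tendstoD(2)[OF assms(5)] assms(6) by (auto simp: filterlim_at_top_dense eventually_conj)
    then obtain n where "Fpq p q (f n) < y" "y < Fpq p q (g n)"
      unfolding eventually_sequentially by blast
    moreover have "convex_comb l (f n) (g n) \<noteq> (\<lambda>x. 0)" if "l \<in> {0..1}" for l
      using assms(7)[OF that] by (simp add: convex_comb_def)
    ultimately show "y \<in> Fpq p q ` {h. schwartz h \<and> h \<noteq> (\<lambda>x. 0)}"
      using assms(3,4) by (intro Fpq_attains_between[OF \<open>1 \<le> p\<close> \<open>1 \<le> q\<close>, of "f n" "g n"]) auto
  qed
qed

end
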